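(* Let $m\ge1$, let $r$ be a rational number with $0\le r<1$, let $k$ be an integer with $1\le k\le m$, and let $\Lambda$ be an antichain in $\mathbb{B}(2m)$ with $\lfloor r k\rfloor+1\le\min_{\lambda\in\Lambda}\rho(\lambda)$. Let $D_0$ be the set of minimal elements (with respect to inclusion) of the family $\bigcup_{\lambda\in\Lambda}\{d\in\mathbb{B}(2m): d\subseteq\lambda,\ \rho(d)=\rho(\lambda)-\lfloor rk\rfloor\}$. For $D\subseteq D_0$ write $W_D=\bigvee_{d\in D}d$. Then \[ \bigl|\mathring{\mathbf{I}}_{r,k}(\mathbb{B}(2m),\Lambda)\bigr|=\binom{m}{k}2^k+\sum_{\substack{D\subseteq D_0\\ |D|>0}}(-1)^{|D|}\sum_{j=0}^{k}\binom{\rho(W_D\vee -W_D)-\rho(W_D)}{j}\binom{m-\tfrac12\rho(W_D\vee-W_D)}{k-j}2^{k-j}. \]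
   Context: For a positive integer $m$, $\pm[1,m]=\{-m,\dots,-1,1,\dots,m\}$. $\mathbb{B}(2m)$ is the Boolean lattice of all subsets of $\pm[1,m]$, with meet $\wedge=\cap$, join $\vee=\cup$, least element $\hat0=\emptyset$, and rank $\rho(b)=|b|$. For $b\in\mathbb{B}(2m)$, $-b=\{-x: x\in b\}$. For $r$, $k$, $\Lambda$ as in the claim, $\mathring{\mathbf{I}}_{r,k}(\mathbb{B}(2m),\Lambda)=\{b\in\mathbb{B}(2m): \rho(b)=k,\ b\wedge -b=\hat0,\ \rho(b\wedge\lambda)>r\cdot k\ \text{for all }\lambda\in\Lambda\}$ (the relatively $r$-blocking $k$-elements for $\Lambda$ containing no pair $\{x,-x\}$). Binomial coefficients $\binom{n}{j}$ are $0$ when $j>n$ or $j<0$. *)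

theory Defs
  imports Complex_Main
begin

definition pmset :: "nat \<Rightarrow> int set" where
  "pmset m = {x. x \<noteq> 0 \<and> \<bar>x\<bar> \<le> int m}"

text \<open>Elements of the Boolean lattice B(2m): all subsets of pmset m.\<close>
definition BL :: "nat \<Rightarrow> int set set" where
  "BL m = Pow (pmset m)"

definition negset :: "int set \<Rightarrow> int set" where
  "negset b = uminus ` b"

definition antichain_in :: "int set set \<Rightarrow> bool" where
  "antichain_in \<Lambda> \<longleftrightarrow> (\<forall>a\<in>\<Lambda>. \<forall>b\<in>\<Lambda>. a \<subseteq> b \<longrightarrow> a = b)"

definition Iring :: "rat \<Rightarrow> nat \<Rightarrow> nat \<Rightarrow> int set set \<Rightarrow> int set set" where
  "Iring r k m \<Lambda> = {b \<in> BL m. card b = k \<and> b \<inter> negset b = {} \<and>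
      (\<forall>l\<in>\<Lambda>. of_nat (card (b \<inter> l)) > r * of_nat k)}"

definition Dfam :: "rat \<Rightarrow> nat \<Rightarrow> nat \<Rightarrow> int set set \<Rightarrow> int set set" where
  "Dfam r k m \<Lambda> = (\<Union>l\<in>\<Lambda>. {d \<in> BL m. d \<subseteq> l \<and>
      card d = card l - nat \<lfloor>r * of_nat k\<rfloor>})"

definition minimal_elems :: "int set set \<Rightarrow> int set set" where
  "minimal_elems F = {d \<in> F. \<not> (\<exists>e\<in>F. e \<subset> d)}"

definition D0 :: "rat \<Rightarrow> nat \<Rightarrow> nat \<Rightarrow> int set set \<Rightarrow> int set set" where
  "D0 r k m \<Lambda> = minimal_elems (Dfam r k m \<Lambda>)"

end

theory Submission
  imports Defs
begin

(* Write U for the k-subsets of \<plusminus>[1,m] containing no pair {x, -x} ("admissible" sets).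
   The proof has three ingredients.
   (1) Blocking: an admissible b meets every \<lambda> \<in> \<Lambda> in more than r k elements iff it
       meets every member of D_0 (lemma blocking_iff_hits_D0).  Hence the set to be
       counted is {b \<in> U. \<forall>d \<in> D_0. b \<inter> d \<noteq> {}}.
   (2) Sieve: by inclusion-exclusion this count is the alternating sum, over D \<subseteq> D_0, of
       the number of b \<in> U disjoint from W_D = \<Union>D (lemma sieve_count).
   (3) Counting avoiders: \<plusminus>[1,m] - W splits into the part -W - W, all of whose elements
       may be chosen freely, and a symmetric part P \<union> -P in which one chooses absolute
       values and then signs (lemmas card_signed_subsets_split, _symmetric, _avoiding).
   The term D = {} of the sieve is the leading term (m choose k) 2^k.  Only \<Lambda> \<subseteq> B(2m)
   and r \<ge> 0 are needed. *)

lemma finite_pmset [simp]: "finite (pmset m)"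
  by (rule finite_subset[of _ "{-int m..int m}"]) (auto simp: pmset_def)

lemma negset_iff [simp]: "x \<in> negset b \<longleftrightarrow> -x \<in> b"
  unfolding negset_def by force

lemma negset_Un: "negset (A \<union> B) = negset A \<union> negset B"
  unfolding negset_def by (rule image_Un)

lemma card_negset: "card (negset b) = card b"
  unfolding negset_def by (simp add: card_image)

lemma finite_negset [simp]: "finite (negset b) = finite b"
  unfolding negset_def by (simp add: finite_image_iff inj_on_def)

definition signed_subsets :: "int set \<Rightarrow> nat \<Rightarrow> int set set" where
  "signed_subsets S t = {b. b \<subseteq> S \<and> b \<inter> negset b = {} \<and> card b = t}"

(* Every antipodal-pair-free set of nonzero integers arises in exactly one
   way: T is its set of absolute values and S its positive part. *)
definition signing :: "int set \<Rightarrow> int set \<Rightarrow> int set" where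
  "signing T S = S \<union> negset (T - S)"

lemma
  assumes pos: "\<forall>x\<in>T. x > 0" and "S \<subseteq> T"
  shows abs_signing: "abs ` signing T S = T"
    and positive_part_signing: "signing T S \<inter> {0<..} = S"
    and signing_consistent: "signing T S \<inter> negset (signing T S) = {}"
proof -
  have abs_pos: "\<bar>x\<bar> = x" if "x \<in> T" for x using pos that by auto
  show "abs ` signing T S = T"
  proof
    show "abs ` signing T S \<subseteq> T"
      using assms abs_pos by (force simp: signing_def)
    show "T \<subseteq> abs ` signing T S"
    proof
      fix x assume "x \<in> T"
      then have "x \<in> signing T S \<or> -x \<in> signing T S" by (auto simp: signing_def)
      then show "x \<in> abs ` signing T S"
        using abs_pos[OF \<open>x \<in> T\<close>] by (metis abs_minus_cancel image_eqI)
    qed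
  qed
  show "signing T S \<inter> {0<..} = S"
    using assms by (force simp: signing_def)
  show "signing T S \<inter> negset (signing T S) = {}"
  proof (rule ccontr)
    assume "signing T S \<inter> negset (signing T S) \<noteq> {}"
    then obtain x where "x \<in> signing T S" "-x \<in> signing T S" by auto
    then have "(x \<in> S \<or> -x \<in> T - S) \<and> (-x \<in> S \<or> x \<in> T - S)"
      by (simp add: signing_def)
    moreover have "y \<in> T \<Longrightarrow> y > 0" for y using pos by auto
    ultimately show False using \<open>S \<subseteq> T\<close> by (smt (verit) Diff_iff subsetD)
  qed
qed

lemma inj_on_abs_consistent:
  assumes "b \<inter> negset b = {}"
  shows "inj_on abs b"
proof (rule inj_onI)
  fix x y assume "x \<in> b" "y \<in> b" "\<bar>x\<bar> = \<bar>y\<bar>"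
  then show "x = y" using assms by (auto simp: abs_eq_iff)
qed

lemma signing_abs_positive_part:
  assumes "b \<inter> negset b = {}" and "0 \<notin> b"
  shows "signing (abs ` b) (b \<inter> {0<..}) = b"
proof (rule set_eqI)
  fix x
  have "x \<in> signing (abs ` b) (b \<inter> {0<..}) \<longleftrightarrow> (x > 0 \<and> x \<in> b) \<or> (x < 0 \<and> x \<in> b)"
    using assms by (auto simp: signing_def abs_if image_iff)
  then show "x \<in> signing (abs ` b) (b \<inter> {0<..}) \<longleftrightarrow> x \<in> b"
    using assms(2) by (cases x "0::int" rule: linorder_cases) auto
qed

lemma bij_betw_signing:
  fixes P :: "int set" and t :: nat
  assumes pos: "\<forall>x\<in>P. x > 0"
  defines "Ts \<equiv> {T. T \<subseteq> P \<and> card T = t}"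
  shows "bij_betw (\<lambda>(T, S). signing T S) (Sigma Ts Pow) (signed_subsets (P \<union> negset P) t)"
proof (rule bij_betw_byWitness[where f' = "\<lambda>b. (abs ` b, b \<inter> {0<..})"])
  show "\<forall>a\<in>Sigma Ts Pow. (\<lambda>b. (abs ` b, b \<inter> {0<..})) ((\<lambda>(T, S). signing T S) a) = a"
  proof (intro ballI)
    fix a assume "a \<in> Sigma Ts Pow"
    then obtain T S where a: "a = (T, S)" "T \<in> Ts" "S \<subseteq> T" by blast
    then have "\<forall>x\<in>T. x > 0" using pos by (auto simp: Ts_def)
    then show "(\<lambda>b. (abs ` b, b \<inter> {0<..})) ((\<lambda>(T, S). signing T S) a) = a"
      using abs_signing positive_part_signing a by simp
  qed
  show "\<forall>b\<in>signed_subsets (P \<union> negset P) t. (\<lambda>(T, S). signing T S) (abs ` b, b \<inter> {0<..}) = b"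
  proof
    fix b assume b: "b \<in> signed_subsets (P \<union> negset P) t"
    then have "0 \<notin> b" using pos by (auto simp: signed_subsets_def)
    with b show "(\<lambda>(T, S). signing T S) (abs ` b, b \<inter> {0<..}) = b"
      using signing_abs_positive_part by (simp add: signed_subsets_def)
  qed
  show "(\<lambda>(T, S). signing T S) ` Sigma Ts Pow \<subseteq> signed_subsets (P \<union> negset P) t"
  proof
    fix b assume "b \<in> (\<lambda>(T, S). signing T S) ` Sigma Ts Pow"
    then obtain T S where b: "b = signing T S" "T \<in> Ts" "S \<subseteq> T" by auto
    then have T: "T \<subseteq> P" "card T = t" and posT: "\<forall>x\<in>T. x > 0"
      using pos by (auto simp: Ts_def)
    have cons: "signing T S \<inter> negset (signing T S) = {}"
      by (rule signing_consistent[OF posT \<open>S \<subseteq> T\<close>])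
    have "card b = card (abs ` signing T S)"
      using card_image[OF inj_on_abs_consistent[OF cons]] b by simp
    also have "\<dots> = t" using abs_signing[OF posT \<open>S \<subseteq> T\<close>] T by simp
    finally have "card b = t" .
    with cons T b show "b \<in> signed_subsets (P \<union> negset P) t"
      by (auto simp: signed_subsets_def signing_def)
  qed
  show "(\<lambda>b. (abs ` b, b \<inter> {0<..})) ` signed_subsets (P \<union> negset P) t \<subseteq> Sigma Ts Pow"
  proof
    fix a assume "a \<in> (\<lambda>b. (abs ` b, b \<inter> {0<..})) ` signed_subsets (P \<union> negset P) t"
    then obtain b where a: "a = (abs ` b, b \<inter> {0<..})"
      and b: "b \<in> signed_subsets (P \<union> negset P) t" by blast
    then have "card (abs ` b) = t"
      by (simp add: signed_subsets_def card_image inj_on_abs_consistent)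
    moreover have "abs ` b \<subseteq> P" using b pos by (force simp: signed_subsets_def)
    moreover have "b \<inter> {0<..} \<subseteq> abs ` b" by force
    ultimately show "a \<in> Sigma Ts Pow"
      using a by (simp add: Ts_def)
  qed
qed

lemma card_signed_subsets_symmetric:
  assumes fin: "finite P" and pos: "\<forall>x\<in>P. x > 0"
  shows "card (signed_subsets (P \<union> negset P) t) = (card P choose t) * 2 ^ t"
proof -
  define Ts where "Ts = {T. T \<subseteq> P \<and> card T = t}"
  have "card (signed_subsets (P \<union> negset P) t) = card (Sigma Ts Pow)"
    using bij_betw_signing[OF pos, of t] by (simp add: Ts_def bij_betw_same_card)
  also have "\<dots> = (\<Sum>T\<in>Ts. card (Pow T))"
    using fin by (intro card_SigmaI) (auto simp: Ts_def finite_subset)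
  also have "\<dots> = (\<Sum>T\<in>Ts. 2 ^ t)"
    using fin by (intro sum.cong) (auto simp: Ts_def card_Pow finite_subset)
  also have "\<dots> = (card P choose t) * 2 ^ t"
    using n_subsets[OF fin] by (simp add: Ts_def)
  finally show ?thesis .
qed

lemma card_signed_subsets_pmset:
  "card (signed_subsets (pmset m) k) = (m choose k) * 2 ^ k"
proof -
  have "pmset m = {1..int m} \<union> negset {1..int m}" by (auto simp: pmset_def)
  then show ?thesis using card_signed_subsets_symmetric[of "{1..int m}" k] by simp
qed

lemma consistent_Un:
  assumes "X \<subseteq> H" "Y \<subseteq> F" and H: "H \<inter> negset H = {}"
    and F: "negset F = F" and disj: "H \<inter> F = {}"
  shows "(X \<union> Y) \<inter> negset (X \<union> Y) = Y \<inter> negset Y"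
proof -
  have "X \<inter> negset X = {}" using assms(1) H unfolding negset_def by blast
  moreover have "X \<inter> negset Y = {}" and "Y \<inter> negset X = {}"
  proof -
    have F_closed: "-x \<in> F \<longleftrightarrow> x \<in> F" for x
      using F by (metis negset_iff)
    show "X \<inter> negset Y = {}"
      using assms(1,2) disj F_closed by (auto; metis IntI empty_iff subsetD)
    show "Y \<inter> negset X = {}"
      using assms(1,2) disj F_closed by (auto; metis IntI empty_iff subsetD)
  qed
  ultimately show ?thesis by (auto simp: negset_Un)
qed

lemma bij_betw_split:
  fixes H F :: "int set" and k :: nat
  assumes fin: "finite H" "finite F" and H: "H \<inter> negset H = {}"
    and F: "negset F = F" and disj: "H \<inter> F = {}"
  defines "Xs \<equiv> {X. X \<subseteq> H \<and> card X \<le> k}"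
  shows "bij_betw (\<lambda>(X, Y). X \<union> Y) (SIGMA X:Xs. signed_subsets F (k - card X))
      (signed_subsets (H \<union> F) k)"
proof (rule bij_betw_byWitness[where f' = "\<lambda>b. (b \<inter> H, b \<inter> F)"])
  show "\<forall>a\<in>SIGMA X:Xs. signed_subsets F (k - card X). (\<lambda>b. (b \<inter> H, b \<inter> F)) ((\<lambda>(X, Y). X \<union> Y) a) = a"
    using disj by (auto simp: Xs_def signed_subsets_def)
  show "\<forall>b\<in>signed_subsets (H \<union> F) k. (\<lambda>(X, Y). X \<union> Y) (b \<inter> H, b \<inter> F) = b"
    by (auto simp: signed_subsets_def)
  show "(\<lambda>(X, Y). X \<union> Y) ` (SIGMA X:Xs. signed_subsets F (k - card X)) \<subseteq> signed_subsets (H \<union> F) k"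
  proof
    fix b assume "b \<in> (\<lambda>(X, Y). X \<union> Y) ` (SIGMA X:Xs. signed_subsets F (k - card X))"
    then obtain X Y where b: "b = X \<union> Y" "X \<subseteq> H" "card X \<le> k" "Y \<subseteq> F"
        "Y \<inter> negset Y = {}" "card Y = k - card X"
      by (auto simp: Xs_def signed_subsets_def)
    have "card b = card X + card Y"
      unfolding b(1) using b fin disj by (intro card_Un_disjoint) (auto intro: finite_subset)
    then show "b \<in> signed_subsets (H \<union> F) k"
      using b consistent_Un[OF b(2,4) H F disj] by (auto simp: signed_subsets_def)
  qed
  show "(\<lambda>b. (b \<inter> H, b \<inter> F)) ` signed_subsets (H \<union> F) k \<subseteq> (SIGMA X:Xs. signed_subsets F (k - card X))"
  proof
    fix a assume "a \<in> (\<lambda>b. (b \<inter> H, b \<inter> F)) ` signed_subsets (H \<union> F) k"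
    then obtain b where a: "a = (b \<inter> H, b \<inter> F)" and b: "b \<subseteq> H \<union> F"
        "b \<inter> negset b = {}" "card b = k"
      by (auto simp: signed_subsets_def)
    have "b = (b \<inter> H) \<union> (b \<inter> F)" using b(1) by auto
    then have "card b = card (b \<inter> H) + card (b \<inter> F)"
      using fin disj card_Un_disjoint[of "b \<inter> H" "b \<inter> F"] by auto
    moreover have "(b \<inter> F) \<inter> negset (b \<inter> F) = {}" using b(2) by auto
    ultimately show "a \<in> (SIGMA X:Xs. signed_subsets F (k - card X))"
      using a b by (auto simp: Xs_def signed_subsets_def)
  qed
qed

lemma card_signed_subsets_split:
  assumes fin: "finite H" "finite F" and H: "H \<inter> negset H = {}"
    and F: "negset F = F" and disj: "H \<inter> F = {}"
  shows "card (signed_subsets (H \<union> F) k) =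
    (\<Sum>j = 0..k. (card H choose j) * card (signed_subsets F (k - j)))"
proof -
  define Xs where "Xs = {X. X \<subseteq> H \<and> card X \<le> k}"
  have finXs: "finite Xs" using fin by (simp add: Xs_def)
  have "card (signed_subsets (H \<union> F) k) =
      card (SIGMA X:Xs. signed_subsets F (k - card X))"
    using bij_betw_split[OF assms, of k] by (simp add: Xs_def bij_betw_same_card)
  also have "\<dots> = (\<Sum>X\<in>Xs. card (signed_subsets F (k - card X)))"
    using finXs fin by (intro card_SigmaI) (auto simp: signed_subsets_def intro: finite_subset)
  also have "\<dots> = (\<Sum>j = 0..k. \<Sum>X | X \<in> Xs \<and> card X = j. card (signed_subsets F (k - card X)))"
    using finXs by (intro sum.group[symmetric]) (auto simp: Xs_def)
  also have "\<dots> = (\<Sum>j = 0..k. (card H choose j) * card (signed_subsets F (k - j)))"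
  proof (rule sum.cong[OF refl])
    fix j assume "j \<in> {0..k}"
    then have "{X. X \<in> Xs \<and> card X = j} = {X. X \<subseteq> H \<and> card X = j}"
      by (auto simp: Xs_def)
    then show "(\<Sum>X | X \<in> Xs \<and> card X = j. card (signed_subsets F (k - card X))) =
        (card H choose j) * card (signed_subsets F (k - j))"
      using n_subsets[OF fin(1), of j] by simp
  qed
  finally show ?thesis .
qed

lemma abs_in_abs_image: "\<bar>x\<bar> \<in> abs ` W \<longleftrightarrow> x \<in> W \<or> -x \<in> W"
  for x :: int
  by (auto simp: image_iff abs_eq_iff) (metis minus_minus)+

lemma
  fixes W :: "int set"
  assumes W: "W \<subseteq> pmset m"
  defines "H \<equiv> negset W - W" and "P \<equiv> {1..int m} - abs ` W"
  shows pmset_minus_decomposition: "pmset m - W = H \<union> (P \<union> negset P)"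
    and decomposition_disjoint: "H \<inter> (P \<union> negset P) = {}"
proof -
  have in_pmset: "x \<in> pmset m \<longleftrightarrow> \<bar>x\<bar> \<in> {1..int m}" for x
    by (auto simp: pmset_def)
  have P_iff: "\<bar>x\<bar> \<in> P \<longleftrightarrow> x \<in> pmset m \<and> x \<notin> W \<and> -x \<notin> W" for x
    unfolding P_def using abs_in_abs_image in_pmset by auto
  have sym_P: "x \<in> P \<union> negset P \<longleftrightarrow> \<bar>x\<bar> \<in> P" for x
    unfolding P_def by (cases "x \<ge> 0") auto
  show "pmset m - W = H \<union> (P \<union> negset P)"
  proof (rule set_eqI)
    fix x
    show "x \<in> pmset m - W \<longleftrightarrow> x \<in> H \<union> (P \<union> negset P)"
    proof (cases "-x \<in> W")
      case True
      then have "-x \<in> pmset m" using W by blast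
      then have "x \<in> pmset m" using in_pmset[of x] in_pmset[of "-x"] by simp
      with True show ?thesis using sym_P P_iff by (auto simp: H_def)
    next
      case False
      then show ?thesis using sym_P P_iff by (auto simp: H_def)
    qed
  qed
  show "H \<inter> (P \<union> negset P) = {}"
  proof (rule equals0I)
    fix x assume "x \<in> H \<inter> (P \<union> negset P)"
    then have "-x \<in> W" and "\<bar>x\<bar> \<in> P" using sym_P by (auto simp: H_def)
    then show False using P_iff by blast
  qed
qed

lemma card_negset_minus:
  assumes "finite W"
  shows "card (negset W - W) = card (W \<union> negset W) - card W"
proof -
  have "card (W \<union> (negset W - W)) = card W + card (negset W - W)"
    using assms by (intro card_Un_disjoint) auto
  then show ?thesis by simp
qed

lemma card_symmetric_closure:
  fixes W :: "int set"
  assumes "finite W" and zero: "0 \<notin> W"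
  shows "card (W \<union> negset W) = 2 * card (abs ` W)"
proof -
  define A where "A = abs ` W"
  have A_pos: "y \<in> A \<Longrightarrow> y > 0" for y using zero by (auto simp: A_def)
  have A_iff: "\<bar>x\<bar> \<in> A \<longleftrightarrow> x \<in> W \<or> -x \<in> W" for x
    unfolding A_def by (rule abs_in_abs_image)
  have "x \<in> W \<union> negset W \<longleftrightarrow> x \<in> A \<union> negset A" for x
  proof (cases x "0::int" rule: linorder_cases)
    case less then show ?thesis using A_iff[of x] A_pos[of x] by (auto simp: abs_of_neg)
  next
    case equal then show ?thesis using zero A_pos[of 0] by auto
  next
    case greater then show ?thesis using A_iff[of x] A_pos[of "-x"] by auto
  qed
  then have "W \<union> negset W = A \<union> negset A" by blast
  moreover have "A \<inter> negset A = {}"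
  proof (rule equals0I)
    fix x assume "x \<in> A \<inter> negset A"
    then have "x > 0" "-x > 0" using A_pos by (auto simp del: neg_0_less_iff_less)
    then show False by simp
  qed
  moreover have "finite A" using assms(1) by (simp add: A_def)
  ultimately show ?thesis by (simp add: card_Un_disjoint card_negset A_def)
qed

lemma card_free_absolute_values:
  assumes W: "W \<subseteq> pmset m"
  shows "card ({1..int m} - abs ` W) = m - card (W \<union> negset W) div 2"
proof -
  have "finite W" using W by (rule finite_subset) simp
  moreover have "0 \<notin> W" using W by (auto simp: pmset_def)
  ultimately have "card (W \<union> negset W) div 2 = card (abs ` W)"
    by (simp add: card_symmetric_closure)
  moreover have "abs ` W \<subseteq> {1..int m}"
  proof
    fix y assume "y \<in> abs ` W"
    then obtain w where w: "w \<in> W" and y: "y = \<bar>w\<bar>" by blast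
    have "w \<in> pmset m" using W w by blast
    then have "w \<noteq> 0" "\<bar>w\<bar> \<le> int m" by (simp_all add: pmset_def)
    then show "y \<in> {1..int m}" using y by simp
  qed
  ultimately show ?thesis using \<open>finite W\<close> by (simp add: card_Diff_subset)
qed

lemma card_signed_subsets_avoiding:
  assumes W: "W \<subseteq> pmset m"
  shows "int (card (signed_subsets (pmset m - W) k)) =
    (\<Sum>j = 0..k. int ((card (W \<union> negset W) - card W) choose j) *
       int ((m - card (W \<union> negset W) div 2) choose (k - j)) * 2 ^ (k - j))"
proof -
  define H where "H = negset W - W"
  define P where "P = {1..int m} - abs ` W"
  have "finite W" using W by (rule finite_subset) simp
  then have fin: "finite H" "finite P" by (simp_all add: H_def P_def)
  have H_consistent: "H \<inter> negset H = {}" by (auto simp: H_def)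
  have F_symmetric: "negset (P \<union> negset P) = P \<union> negset P" by (auto simp: negset_Un)
  have P_pos: "\<forall>x\<in>P. x > 0" by (auto simp: P_def)
  have "card (signed_subsets (pmset m - W) k) =
      (\<Sum>j = 0..k. (card H choose j) * card (signed_subsets (P \<union> negset P) (k - j)))"
    unfolding pmset_minus_decomposition[OF W, folded H_def P_def]
    using fin H_consistent F_symmetric decomposition_disjoint[OF W, folded H_def P_def]
    by (intro card_signed_subsets_split) simp_all
  also have "\<dots> = (\<Sum>j = 0..k. (card H choose j) * ((card P choose (k - j)) * 2 ^ (k - j)))"
    using card_signed_subsets_symmetric[OF fin(2) P_pos] by simp
  finally show ?thesis
    unfolding H_def P_def card_negset_minus[OF \<open>finite W\<close>] card_free_absolute_values[OF W]
    by (simp add: mult.assoc)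
qed

lemma minimal_elem_below:
  assumes "finite F" "d \<in> F"
  obtains e where "e \<in> minimal_elems F" "e \<subseteq> d"
  using finite_has_minimal2[OF assms] unfolding minimal_elems_def by blast

lemma less_of_nat_iff_nat_floor:
  fixes x :: "'a :: floor_ceiling"
  assumes "0 \<le> x"
  shows "x < of_nat n \<longleftrightarrow> nat \<lfloor>x\<rfloor> < n"
  using assms floor_less_iff[of x "int n"] by (simp add: nat_less_iff)

lemma D0_subset_BL: "D0 r k m \<Lambda> \<subseteq> BL m"
  by (auto simp: D0_def minimal_elems_def Dfam_def)

(* If b meets some \<lambda> \<in> \<Lambda> in at most \<lfloor>r k\<rfloor> elements, then b misses a member of D_0:
   \<lambda> - b contains a (\<rho>(\<lambda>) - \<lfloor>r k\<rfloor>)-subset, which lies above a minimal one. *)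
lemma D0_member_avoiding:
  assumes \<Lambda>: "\<Lambda> \<subseteq> BL m" and l: "l \<in> \<Lambda>"
    and small: "card (b \<inter> l) \<le> nat \<lfloor>r * of_nat k\<rfloor>"
  obtains e where "e \<in> D0 r k m \<Lambda>" "b \<inter> e = {}"
proof -
  let ?f = "nat \<lfloor>r * of_nat k\<rfloor>"
  have "finite l" using l \<Lambda> finite_subset[OF _ finite_pmset] by (auto simp: BL_def)
  then have "card (l - b) = card l - card (b \<inter> l)"
    by (metis Diff_Int2 card_Diff_subset_Int finite_Int inf_commute)
  with small have "card l - ?f \<le> card (l - b)" by simp
  then obtain d where d: "d \<subseteq> l - b" "card d = card l - ?f"
    by (meson obtain_subset_with_card_n)
  have "d \<in> Dfam r k m \<Lambda>"
    using d l \<Lambda> by (auto simp: Dfam_def BL_def)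
  moreover have "finite (Dfam r k m \<Lambda>)"
    by (rule finite_subset[of _ "BL m"]) (auto simp: Dfam_def BL_def)
  ultimately obtain e where "e \<in> D0 r k m \<Lambda>" "e \<subseteq> d"
    using minimal_elem_below unfolding D0_def by blast
  with d(1) show ?thesis using that by blast
qed

(* If b misses d \<subseteq> \<lambda> with \<rho>(d) = \<rho>(\<lambda>) - \<lfloor>r k\<rfloor>, then
   |b \<inter> \<lambda>| \<le> |\<lambda> - d| = \<lfloor>r k\<rfloor>; the converse is D0_member_avoiding. *)
lemma blocking_iff_hits_D0:
  assumes \<Lambda>: "\<Lambda> \<subseteq> BL m" and r: "0 \<le> r"
  shows "(\<forall>l\<in>\<Lambda>. r * of_nat k < of_nat (card (b \<inter> l))) \<longleftrightarrow> (\<forall>d\<in>D0 r k m \<Lambda>. b \<inter> d \<noteq> {})"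
proof -
  define f where "f = nat \<lfloor>r * of_nat k\<rfloor>"
  have threshold: "r * of_nat k < of_nat n \<longleftrightarrow> f < n" for n
    unfolding f_def using r by (intro less_of_nat_iff_nat_floor) simp
  show ?thesis
    unfolding threshold
  proof (intro iffI ballI notI)
    fix d assume blocking: "\<forall>l\<in>\<Lambda>. f < card (b \<inter> l)"
      and "d \<in> D0 r k m \<Lambda>" and "b \<inter> d = {}"
    then obtain l where l: "l \<in> \<Lambda>" "d \<subseteq> l" "card d = card l - f"
      by (auto simp: D0_def minimal_elems_def Dfam_def f_def)
    have "finite l" using l(1) \<Lambda> finite_subset[OF _ finite_pmset] by (auto simp: BL_def)
    have "card (b \<inter> l) \<le> card (l - d)"
      using \<open>b \<inter> d = {}\<close> \<open>finite l\<close> by (intro card_mono) auto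
    also have "\<dots> \<le> f"
      using l \<open>finite l\<close> by (simp add: card_Diff_subset finite_subset)
    finally show False using blocking l(1) by fastforce
  next
    fix l assume "\<forall>d\<in>D0 r k m \<Lambda>. b \<inter> d \<noteq> {}" and "l \<in> \<Lambda>"
    then show "f < card (b \<inter> l)"
      using D0_member_avoiding[OF \<Lambda> \<open>l \<in> \<Lambda>\<close>, of b r k] unfolding f_def by force
  qed
qed

lemma sieve_count:
  fixes U :: "'a set" and A :: "'b \<Rightarrow> 'a set"
  assumes U: "finite U" and D: "finite D"
  shows "int (card {x \<in> U. \<forall>d\<in>D. x \<in> A d}) =
    (\<Sum>B\<in>Pow D. (-1) ^ card B * int (card {x \<in> U. \<forall>d\<in>B. x \<notin> A d}))"
proof -
  define G where "G d = - A d" for d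
  have avoid: "\<Inter> (G ` B) \<inter> U = {x \<in> U. \<forall>d\<in>B. x \<notin> A d}" for B
    by (auto simp: G_def)
  have additive: "int (card ((S \<union> T) \<inter> U)) = int (card (S \<inter> U)) + int (card (T \<inter> U))"
    if "disjnt S T" for S T :: "'a set"
  proof -
    have "(S \<union> T) \<inter> U = (S \<inter> U) \<union> (T \<inter> U)" by auto
    moreover have "card ((S \<inter> U) \<union> (T \<inter> U)) = card (S \<inter> U) + card (T \<inter> U)"
      using that U by (intro card_Un_disjoint) (auto simp: disjnt_def)
    ultimately show ?thesis by simp
  qed
  have "{x \<in> U. \<forall>d\<in>D. x \<in> A d} = U - (\<Union> (G ` D) \<inter> U)" by (auto simp: G_def)
  then have "int (card {x \<in> U. \<forall>d\<in>D. x \<in> A d}) = int (card U) - int (card (\<Union> (G ` D) \<inter> U))"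
    using U by (simp add: card_Diff_subset of_nat_diff card_mono)
  also have "int (card (\<Union> (G ` D) \<inter> U)) =
      (\<Sum>B | B \<subseteq> D \<and> B \<noteq> {}. (-1) ^ (card B + 1) * int (card (\<Inter> (G ` B) \<inter> U)))"
    by (rule Incl_Excl_UN[where f = "\<lambda>S. int (card (S \<inter> U))", OF additive D])
  also have "int (card U) - \<dots> =
      (\<Sum>B\<in>insert {} {B. B \<subseteq> D \<and> B \<noteq> {}}. (-1) ^ card B * int (card (\<Inter> (G ` B) \<inter> U)))"
    using D by (simp add: sum_negf[symmetric])
  also have "insert {} {B. B \<subseteq> D \<and> B \<noteq> {}} = Pow D" by auto
  finally show ?thesis unfolding avoid .
qed

lemma card_Iring_sieve:
  assumes "\<Lambda> \<subseteq> BL m" and "0 \<le> r"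
  shows "int (card (Iring r k m \<Lambda>)) =
    (\<Sum>B\<in>Pow (D0 r k m \<Lambda>). (-1) ^ card B * int (card (signed_subsets (pmset m - \<Union>B) k)))"
proof -
  let ?D0 = "D0 r k m \<Lambda>" and ?U = "signed_subsets (pmset m) k"
  have fin_D0: "finite ?D0" by (rule finite_subset[OF D0_subset_BL]) (simp add: BL_def)
  have fin_U: "finite ?U"
    by (rule finite_subset[of _ "Pow (pmset m)"]) (auto simp: signed_subsets_def)
  have "Iring r k m \<Lambda> = {b \<in> ?U. \<forall>d\<in>?D0. b \<inter> d \<noteq> {}}"
    using blocking_iff_hits_D0[OF assms] by (auto simp: Iring_def signed_subsets_def BL_def)
  moreover have "{b \<in> ?U. \<forall>d\<in>B. b \<inter> d = {}} = signed_subsets (pmset m - \<Union>B) k" for B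
    by (auto simp: signed_subsets_def)
  ultimately show ?thesis
    using sieve_count[OF fin_U fin_D0, of "\<lambda>d. {b. b \<inter> d \<noteq> {}}"] by simp
qed

theorem mainTheorem4:
  fixes m k :: nat and r :: rat and \<Lambda> :: "int set set"
  assumes "m \<ge> 1"
    and "0 \<le> r" and "r < 1"
    and "1 \<le> k" and "k \<le> m"
    and "\<Lambda> \<subseteq> BL m" and "antichain_in \<Lambda>"
    and "\<forall>l\<in>\<Lambda>. \<lfloor>r * of_nat k\<rfloor> + 1 \<le> int (card l)"
  shows "int (card (Iring r k m \<Lambda>)) =
    int (m choose k) * 2 ^ k +
    (\<Sum>D \<in> {D. D \<subseteq> D0 r k m \<Lambda> \<and> card D > 0}.
       (-1) ^ card D *
       (\<Sum>j = 0..k.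
          int ((card (\<Union>D \<union> negset (\<Union>D)) - card (\<Union>D)) choose j) *
          int ((m - card (\<Union>D \<union> negset (\<Union>D)) div 2) choose (k - j)) *
          2 ^ (k - j)))"
proof -
  let ?D0 = "D0 r k m \<Lambda>" and ?N = "\<lambda>B. int (card (signed_subsets (pmset m - \<Union>B) k))"
  have fin_D0: "finite ?D0" by (rule finite_subset[OF D0_subset_BL]) (simp add: BL_def)
  have "int (card (Iring r k m \<Lambda>)) = (\<Sum>B\<in>Pow ?D0. (-1) ^ card B * ?N B)"
    using card_Iring_sieve[OF assms(6,2)] .
  also have "Pow ?D0 = insert {} {D. D \<subseteq> ?D0 \<and> card D > 0}"
    using fin_D0 by (auto simp: card_gt_0_iff intro: finite_subset)
  also have "(\<Sum>B\<in>insert {} {D. D \<subseteq> ?D0 \<and> card D > 0}. (-1) ^ card B * ?N B) =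
      ?N {} + (\<Sum>B | B \<subseteq> ?D0 \<and> card B > 0. (-1) ^ card B * ?N B)"
    using fin_D0 by (subst sum.insert) auto
  also have "?N {} = int (m choose k) * 2 ^ k"
    by (simp add: card_signed_subsets_pmset)
  also have "(\<Sum>B | B \<subseteq> ?D0 \<and> card B > 0. (-1) ^ card B * ?N B) =
    (\<Sum>D | D \<subseteq> ?D0 \<and> card D > 0. (-1) ^ card D *
       (\<Sum>j = 0..k.
          int ((card (\<Union>D \<union> negset (\<Union>D)) - card (\<Union>D)) choose j) *
          int ((m - card (\<Union>D \<union> negset (\<Union>D)) div 2) choose (k - j)) *
          2 ^ (k - j)))"
    using D0_subset_BL[of r k m \<Lambda>]
    by (intro sum.cong refl, subst card_signed_subsets_avoiding) (auto simp: BL_def)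
  finally show ?thesis .
qed

end
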